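(* Let $q$ be a prime power with $q\equiv 3\pmod 4$, let $s\in\mathbb{N}$ be even, let $b\in\mathbb{F}_q^*$, and let $f(x)=x^s\left(x^{(q-1)/2}+b\right)\in\mathbb{F}_q[x]$. If $f$ is a permutation polynomial of $\mathbb{F}_q$, then $\delta_f\le 4s-3$.
   Context: A polynomial $f\in\mathbb{F}_q[x]$ is a permutation polynomial of $\mathbb{F}_q$ if $c\mapsto f(c)$ is a bijection of $\mathbb{F}_q$. For $a\in\mathbb{F}_q^*$, $\Delta_{f,a}(x)=f(x+a)-f(x)$, and the differential uniformity is $\delta_f=\max_{a\in\mathbb{F}_q^*,\,c\in\mathbb{F}_q}|\{x\in\mathbb{F}_q:\Delta_{f,a}(x)=c\}|$. *)

theory Defs
  imports "HOL-Computational_Algebra.Polynomial" "HOL-Library.Cardinality"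
begin

text \<open>Finite field F_q is modelled as a type 'a of class finite and field, q = CARD('a).\<close>

definition permutation_polynomial :: "'a::{finite,field} poly \<Rightarrow> bool" where
  "permutation_polynomial f \<longleftrightarrow> bij (poly f)"

definition diff_uniformity :: "'a::{finite,field} poly \<Rightarrow> nat" where
  "diff_uniformity f =
     Max {card {x. poly f (x + a) - poly f x = c} | a c. a \<noteq> 0}"

end

theory Submission
  imports Defs
begin

text \<open>Write \<open>\<eta>(x) = x\<^bsup>(q-1)/2\<^esup>\<close>, so \<open>f(x) = x\<^sup>s (\<eta>(x) + b)\<close>; since \<open>f\<close> permutes the field
  and \<open>f(0) = 0\<close>, \<open>f(1) = b + 1\<close>, \<open>f(-1) = b - 1\<close>, we have \<open>b \<noteq> \<plusminus>1\<close>. On the set where \<open>\<eta>(x + a) = \<epsilon>\<close> and \<open>\<eta>(x) = \<epsilon>'\<close> the equation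
  \<open>f(x + a) - f(x) = c\<close> is the polynomial equation \<open>(b + \<epsilon>)(x + a)\<^sup>s - (b + \<epsilon>')x\<^sup>s = c\<close>,
  of degree at most \<open>s\<close>, and at most \<open>s - 1\<close> when \<open>\<epsilon> = \<epsilon>'\<close>. So the four branches have at most
  \<open>4s - 2\<close> solutions together, and \<open>0\<close> and \<open>-a\<close> each lie in two branches. If there were
  \<open>4s - 2\<close> solutions, neither \<open>0\<close> nor \<open>-a\<close> would be one, and three of the branch polynomials
  would split into linear factors over their solution sets,
  and evaluating them at \<open>0\<close> and \<open>-a\<close> (using \<open>\<eta>(-1) = -1\<close>, as \<open>q \<equiv> 3 (mod 4)\<close>) would give
  \<open>\<eta>(2) = \<eta>(-2) = -\<eta>(2)\<close>, which is impossible.\<close>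

lemma of_nat_CARD_eq_0: "of_nat CARD('a::{finite,field}) = (0::'a)"
proof -
  have shift: "bij_betw (\<lambda>x::'a. x + 1) UNIV UNIV"
    by (rule bij_betw_byWitness[where f'="\<lambda>x. x - 1"]) auto
  have "(\<Sum>x\<in>UNIV. x + 1) = (\<Sum>x\<in>(UNIV::'a set). x)"
    using sum.reindex_bij_betw[OF shift, of "\<lambda>x. x"] by simp
  then show ?thesis
    by (simp add: sum.distrib)
qed

lemma two_neq_0_if_odd_CARD:
  assumes "odd CARD('a::{finite,field})"
  shows "(2::'a) \<noteq> 0"
proof
  assume two: "(2::'a) = 0"
  obtain k where "CARD('a) = 2 * k + 1"
    using assms oddE by blast
  then have "(0::'a) = 2 * of_nat k + 1"
    using of_nat_CARD_eq_0[where 'a='a] by (simp add: add.commute)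
  with two show False by simp
qed

lemma power_CARD_minus_1_eq_1:
  fixes x :: "'a::{finite,field}"
  assumes "x \<noteq> 0"
  shows "x ^ (CARD('a) - 1) = 1"
proof -
  let ?U = "UNIV - {0::'a}"
  have "bij_betw (\<lambda>y. x * y) ?U ?U"
    by (rule bij_betw_byWitness[where f'="\<lambda>y. y / x"]) (use assms in auto)
  then have "(\<Prod>y\<in>?U. x * y) = (\<Prod>y\<in>?U. y)"
    using prod.reindex_bij_betw[of _ ?U ?U "\<lambda>y. y"] by simp
  moreover have "(\<Prod>y\<in>?U. x * y) = x ^ card ?U * (\<Prod>y\<in>?U. y)"
    by (simp add: prod.distrib)
  moreover have "card ?U = CARD('a) - 1"
    by (simp add: card_Diff_subset)
  ultimately show ?thesis
    by simp
qed

text \<open>By Euler's criterion this is, for odd \<open>q\<close>, the quadratic character with values in \<open>{0, 1, -1}\<close>.\<close>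

definition quadratic_char :: "'a::{finite,field} \<Rightarrow> 'a" where
  "quadratic_char x = x ^ ((CARD('a) - 1) div 2)"

lemma quadratic_char_mult: "quadratic_char (x * y) = quadratic_char x * quadratic_char y"
  by (simp add: quadratic_char_def power_mult_distrib)

lemma quadratic_char_prod: "quadratic_char (\<Prod>r\<in>A. f r) = (\<Prod>r\<in>A. quadratic_char (f r))"
  by (simp add: quadratic_char_def prod_power_distrib)

lemma quadratic_char_cases:
  fixes x :: "'a::{finite,field}"
  assumes "odd CARD('a)" "x \<noteq> 0"
  shows "quadratic_char x = 1 \<or> quadratic_char x = -1"
proof -
  have "2 * ((CARD('a) - 1) div 2) = CARD('a) - 1"
    using assms(1) by presburger
  then have "(quadratic_char x)\<^sup>2 = 1"
    using power_CARD_minus_1_eq_1[OF assms(2)]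
    by (metis quadratic_char_def power_mult mult.commute)
  then show ?thesis
    by (simp add: power2_eq_1_iff)
qed

lemma quadratic_char_neg_1:
  assumes "CARD('a::{finite,field}) mod 4 = 3"
  shows "quadratic_char (-1::'a) = -1"
proof -
  have "odd ((CARD('a) - 1) div 2)"
    using assms by presburger
  then show ?thesis
    by (simp add: quadratic_char_def)
qed

lemma quadratic_char_minus:
  assumes "CARD('a::{finite,field}) mod 4 = 3"
  shows "quadratic_char (- x :: 'a) = - quadratic_char x"
  using quadratic_char_mult[of "-1" x] quadratic_char_neg_1[OF assms] by simp

lemma prod_linear_factors_dvd:
  fixes P :: "'a::idom poly"
  assumes "finite A" "\<forall>r\<in>A. poly P r = 0"
  shows "(\<Prod>r\<in>A. [:-r, 1:]) dvd P"
  using assms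
proof (induction A arbitrary: P rule: finite_induct)
  case empty
  then show ?case by simp
next
  case (insert x A)
  then have "(\<Prod>r\<in>A. [:-r, 1:]) dvd P"
    by simp
  then obtain R where R: "P = (\<Prod>r\<in>A. [:-r, 1:]) * R"
    by (rule dvdE)
  have "poly (\<Prod>r\<in>A. [:-r, 1:]) x \<noteq> 0"
    using insert.hyps by (auto simp: poly_prod)
  with R insert.prems have "poly R x = 0"
    by simp
  then have "[:-x, 1:] dvd R"
    by (simp add: poly_eq_0_iff_dvd)
  then show ?case
    unfolding prod.insert[OF insert.hyps] R mult.commute[of _ R] by (rule mult_dvd_mono) simp
qed

lemma poly_eq_lead_coeff_prod_roots:
  fixes P :: "'a::idom poly"
  assumes "P \<noteq> 0" "finite A" "\<forall>r\<in>A. poly P r = 0" "card A = degree P"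
  shows "poly P z = lead_coeff P * (\<Prod>r\<in>A. z - r)"
proof -
  let ?Q = "\<Prod>r\<in>A. [:-r, 1:]"
  obtain R where R: "P = ?Q * R"
    using prod_linear_factors_dvd[OF assms(2,3)] by (rule dvdE)
  have "degree ?Q = card A"
    by (subst degree_prod_eq_sum_degree) auto
  moreover have "?Q \<noteq> 0" "R \<noteq> 0"
    using R assms(1) by auto
  ultimately have "degree P = card A + degree R"
    using R by (simp add: degree_mult_eq)
  then have "degree R = 0"
    using assms(4) by simp
  then obtain l where "R = [:l:]"
    using degree0_coeffs by blast
  then show ?thesis
    using R by (simp add: poly_prod lead_coeff_mult lead_coeff_prod mult.commute)
qed

lemma card_le_degree_if_roots:
  fixes P :: "'a::{finite,idom} poly"
  assumes "P \<noteq> 0" "\<forall>r\<in>A. poly P r = 0"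
  shows "card A \<le> degree P"
  using card_mono[of "{x. poly P x = 0}" A] card_poly_roots_bound[OF assms(1)] assms(2)
  by force

lemma sum_le_sum_card_by_double_counting:
  fixes J :: "'i \<Rightarrow> 'x set" and w :: "'x \<Rightarrow> nat"
  assumes "finite S" "finite I" "\<And>i. i \<in> I \<Longrightarrow> J i \<subseteq> S"
    and "\<And>x. x \<in> S \<Longrightarrow> w x \<le> card {i \<in> I. x \<in> J i}"
  shows "(\<Sum>x\<in>S. w x) \<le> (\<Sum>i\<in>I. card (J i))"
proof -
  have "(\<Sum>x\<in>S. w x) \<le> (\<Sum>x\<in>S. \<Sum>i\<in>I. of_bool (x \<in> J i))"
    using assms(2,4) by (intro sum_mono) (simp add: Int_def)
  also have "\<dots> = (\<Sum>i\<in>I. \<Sum>x\<in>S. of_bool (x \<in> J i))"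
    by (rule sum.swap)
  also have "\<dots> = (\<Sum>i\<in>I. card (J i))"
    using assms(1,3) by (intro sum.cong) (auto simp: Int_absorb1)
  finally show ?thesis .
qed

lemma diff_uniformity_le:
  fixes f :: "'a::{finite,field} poly"
  assumes "\<And>a c. a \<noteq> 0 \<Longrightarrow> card {x. poly f (x + a) - poly f x = c} \<le> n"
  shows "diff_uniformity f \<le> n"
proof -
  let ?M = "{card {x. poly f (x + a) - poly f x = c} | a c. a \<noteq> 0}"
  have "?M \<subseteq> {..CARD('a)}"
    by (auto intro: card_mono)
  then have "finite ?M"
    using finite_subset by blast
  moreover have "?M \<noteq> {}"
    using one_neq_zero by blast
  moreover have "\<forall>m\<in>?M. m \<le> n"
    using assms by blast
  ultimately show ?thesis
    unfolding diff_uniformity_def by simp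
qed

definition pm_one :: "bool \<Rightarrow> 'a::{one,uminus}" where
  "pm_one u = (if u then 1 else -1)"

locale difference_equation =
  fixes a b c :: "'a::{finite,field}" and s :: nat
  assumes card_mod_4: "CARD('a) mod 4 = 3"
    and even_s: "even s" and s_pos: "s > 0"
    and b_nonzero: "b \<noteq> 0" and b_neq_1: "b \<noteq> 1" and b_neq_neg_1: "b \<noteq> -1"
    and a_nonzero: "a \<noteq> 0"
begin

lemma odd_card: "odd CARD('a)"
  using card_mod_4 by presburger

lemma two_nonzero: "(2::'a) \<noteq> 0"
  using two_neq_0_if_odd_CARD[OF odd_card] .

lemma ex_pm_one_quadratic_char: "\<exists>u. x = 0 \<or> quadratic_char x = pm_one u" for x :: 'a
  using quadratic_char_cases[OF odd_card, of x] unfolding pm_one_def by metis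

definition solutions :: "'a set" where
  "solutions = {x. (x + a) ^ s * (quadratic_char (x + a) + b) - x ^ s * (quadratic_char x + b) = c}"

text \<open>On \<open>branch_solutions u v\<close> the character values of \<open>x + a\<close> and \<open>x\<close> are frozen, so the
  equation becomes the polynomial equation \<open>branch_poly u v = 0\<close>.\<close>

definition branch_solutions :: "bool \<Rightarrow> bool \<Rightarrow> 'a set" where
  "branch_solutions u v = {x \<in> solutions.
     (x + a = 0 \<or> quadratic_char (x + a) = pm_one u) \<and> (x = 0 \<or> quadratic_char x = pm_one v)}"

definition branch_poly :: "bool \<Rightarrow> bool \<Rightarrow> 'a poly" where
  "branch_poly u v = smult (b + pm_one u) ([:a, 1:] ^ s) - smult (b + pm_one v) (monom 1 s) - [:c:]"

lemma poly_branch_poly: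
  "poly (branch_poly u v) x = (b + pm_one u) * (x + a) ^ s - (b + pm_one v) * x ^ s - c"
  by (simp add: branch_poly_def poly_monom add.commute)

lemma poly_branch_poly_0: "poly (branch_poly u v) 0 = (b + pm_one u) * a ^ s - c"
  using s_pos by (simp add: poly_branch_poly zero_power)

lemma poly_branch_poly_neg_a: "poly (branch_poly u v) (-a) = - (b + pm_one v) * a ^ s - c"
  using s_pos even_s by (simp add: poly_branch_poly zero_power algebra_simps)

lemma branch_poly_root: "x \<in> branch_solutions u v \<Longrightarrow> poly (branch_poly u v) x = 0"
  using s_pos by (auto simp: branch_solutions_def solutions_def poly_branch_poly zero_power algebra_simps)

lemma branch_poly_nonzero: "branch_poly u v \<noteq> 0"
proof
  assume "branch_poly u v = 0"
  then have "poly (branch_poly u v) 0 - poly (branch_poly u v) (-a) = 0"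
    by simp
  then have "(2 * b + pm_one u + pm_one v) * a ^ s = 0"
    by (simp add: poly_branch_poly_0 poly_branch_poly_neg_a algebra_simps)
  moreover have "2 * b + pm_one u + pm_one v \<noteq> 0"
  proof -
    have "b + 1 \<noteq> 0" "b - 1 \<noteq> 0"
      using b_neq_neg_1 b_neq_1 by (simp_all add: add_eq_0_iff2)
    then have "2 * b \<noteq> 0" "2 * (b + 1) \<noteq> 0" "2 * (b - 1) \<noteq> 0"
      using two_nonzero b_nonzero by (simp_all only: mult_eq_0_iff) simp_all
    then show ?thesis
      by (cases u; cases v) (simp_all add: pm_one_def algebra_simps)
  qed
  ultimately show False
    using a_nonzero by simp
qed

lemma coeff_branch_poly: "coeff (branch_poly u v) s = pm_one u - pm_one v"
  using s_pos by (simp add: branch_poly_def coeff_linear_power coeff_pCons split: nat.split)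

lemma degree_branch_poly: "degree (branch_poly u v) \<le> (if u = v then s - 1 else s)"
proof -
  have "degree (branch_poly u v) \<le> s"
    unfolding branch_poly_def
    by (intro degree_diff_le degree_smult_le[THEN order_trans])
       (auto simp: degree_linear_power degree_monom_le)
  moreover have "degree (branch_poly u v) \<noteq> s" if "u = v"
  proof
    assume "degree (branch_poly u v) = s"
    then have "lead_coeff (branch_poly u v) = 0"
      using that coeff_branch_poly[of u v] by simp
    then show False
      using branch_poly_nonzero[of u v] by simp
  qed
  ultimately show ?thesis
    by auto
qed

lemma card_branch_solutions_le: "card (branch_solutions u v) \<le> degree (branch_poly u v)"
  using card_le_degree_if_roots[OF branch_poly_nonzero] branch_poly_root by blast

lemma card_solutions_le_sum_branches:
  "card solutions + card (solutions \<inter> {0, -a}) \<le> (\<Sum>(u, v)\<in>UNIV. card (branch_solutions u v))"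
proof -
  have "1 + of_bool (x \<in> {0, -a}) \<le> card {p. x \<in> case_prod branch_solutions p}"
    if x: "x \<in> solutions" for x
  proof -
    let ?T = "{p. x \<in> case_prod branch_solutions p}"
    obtain u v where uv: "(u, v) \<in> ?T"
      using x ex_pm_one_quadratic_char[of x] ex_pm_one_quadratic_char[of "x + a"]
      by (auto simp: branch_solutions_def)
    show ?thesis
    proof (cases "x \<in> {0, -a}")
      case True
      then have "(u, \<not> v) \<in> ?T \<or> (\<not> u, v) \<in> ?T"
        using uv a_nonzero by (auto simp: branch_solutions_def)
      then obtain p where "p \<in> ?T" "p \<noteq> (u, v)"
        by blast
      then have "card {(u, v), p} \<le> card ?T"
        using uv by (intro card_mono) auto
      then show ?thesis
        using True \<open>p \<noteq> (u, v)\<close> by simp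
    next
      case False
      then show ?thesis
        using uv by (simp add: Suc_le_eq card_gt_0_iff) blast
    qed
  qed
  then have "(\<Sum>x\<in>solutions. 1 + of_bool (x \<in> {0, -a})) \<le> (\<Sum>p\<in>UNIV. card (case_prod branch_solutions p))"
    by (intro sum_le_sum_card_by_double_counting) (auto simp: branch_solutions_def)
  moreover have "(\<Sum>x\<in>solutions. 1 + of_bool (x \<in> {0, -a})) = card solutions + card (solutions \<inter> {0, -a})"
    by (simp only: sum.distrib) (simp del: insert_iff)
  ultimately show ?thesis
    by (simp add: case_prod_unfold)
qed

lemma quadratic_char_split_branch_poly:
  assumes tight: "card (branch_solutions u v) = degree (branch_poly u v)"
    and ends: "0 \<notin> solutions" "-a \<notin> solutions"
  defines "l \<equiv> quadratic_char (lead_coeff (branch_poly u v))"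
    and "n \<equiv> card (branch_solutions u v)"
  shows "quadratic_char (poly (branch_poly u v) 0) = l * (- pm_one v) ^ n"
    and "quadratic_char (poly (branch_poly u v) (-a)) = l * (- pm_one u) ^ n"
proof -
  have split: "quadratic_char (poly (branch_poly u v) z) = l * (\<Prod>r\<in>branch_solutions u v. quadratic_char (z - r))" for z
    using poly_eq_lead_coeff_prod_roots[OF branch_poly_nonzero _ _ tight] branch_poly_root
    by (simp add: l_def quadratic_char_mult quadratic_char_prod)
  have char_r: "quadratic_char r = pm_one v" "quadratic_char (r + a) = pm_one u"
    if "r \<in> branch_solutions u v" for r
    using that ends by (auto simp: branch_solutions_def add_eq_0_iff2)
  have "quadratic_char (0 - r) = - pm_one v" "quadratic_char (-a - r) = - pm_one u"
    if "r \<in> branch_solutions u v" for r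
    using char_r[OF that] quadratic_char_minus[OF card_mod_4, of r]
      quadratic_char_minus[OF card_mod_4, of "r + a"]
    by (simp_all add: algebra_simps)
  then show "quadratic_char (poly (branch_poly u v) 0) = l * (- pm_one v) ^ n"
    and "quadratic_char (poly (branch_poly u v) (-a)) = l * (- pm_one u) ^ n"
    by (simp_all add: split n_def)
qed

lemma card_solutions_le: "card solutions \<le> 4 * s - 3"
proof (rule ccontr)
  assume "\<not> ?thesis"
  then have large: "4 * s - 2 \<le> card solutions"
    by simp
  let ?N = "\<lambda>u v. card (branch_solutions u v)" and ?d = "\<lambda>u v. degree (branch_poly u v)"
  have "card solutions + card (solutions \<inter> {0, -a})
      \<le> ?N True True + ?N True False + ?N False True + ?N False False"
    using card_solutions_le_sum_branches
    by (simp add: UNIV_Times_UNIV[symmetric] sum.cartesian_product[symmetric] UNIV_bool add_ac)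
  moreover have "?N True True \<le> ?d True True" "?N True False \<le> ?d True False"
    "?N False True \<le> ?d False True" "?N False False \<le> ?d False False"
    using card_branch_solutions_le by blast+
  moreover have "?d True True \<le> s - 1" "?d True False \<le> s" "?d False True \<le> s" "?d False False \<le> s - 1"
    using degree_branch_poly by (metis (full_types))+
  ultimately have "card (solutions \<inter> {0, -a}) = 0" and tight_TT: "?N True True = ?d True True"
    and tight_TF: "?N True False = ?d True False" "?d True False = s"
    and tight_FT: "?N False True = ?d False True" "?d False True = s"
    using large s_pos by linarith+
  then have ends: "0 \<notin> solutions" "-a \<notin> solutions"
    by auto
  have "quadratic_char ((b + 1) * a ^ s - c) = quadratic_char 2"
    using quadratic_char_split_branch_poly(1)[OF tight_TF(1) ends] coeff_branch_poly[of True False] tight_TF(2)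
    by (simp add: poly_branch_poly_0 pm_one_def)
  moreover have "quadratic_char (- (b + 1) * a ^ s - c) = quadratic_char (-2)"
    using quadratic_char_split_branch_poly(2)[OF tight_FT(1) ends] coeff_branch_poly[of False True] tight_FT(2)
    by (simp add: poly_branch_poly_neg_a pm_one_def)
  moreover have "quadratic_char ((b + 1) * a ^ s - c) = quadratic_char (- (b + 1) * a ^ s - c)"
    using quadratic_char_split_branch_poly[OF tight_TT ends]
    by (simp add: poly_branch_poly_0 poly_branch_poly_neg_a pm_one_def)
  ultimately have "quadratic_char (2::'a) = - quadratic_char 2"
    using quadratic_char_minus[OF card_mod_4, of 2] by simp
  then show False
    using quadratic_char_cases[OF odd_card two_nonzero] two_nonzero by auto
qed

end

theorem theorem1p2:
  fixes b :: "'a::{finite,field}" and s :: nat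
  assumes "CARD('a) mod 4 = 3"
    and "even s" and "s > 0"
    and "b \<noteq> 0"
    and "permutation_polynomial
           (monom 1 s * (monom 1 ((CARD('a) - 1) div 2) + [:b:]))"
  shows "int (diff_uniformity
           (monom 1 s * (monom 1 ((CARD('a) - 1) div 2) + [:b:]))) \<le> 4 * int s - 3"
proof -
  define f :: "'a poly" where "f = monom 1 s * (monom 1 ((CARD('a) - 1) div 2) + [:b:])"
  have poly_f: "poly f x = x ^ s * (quadratic_char x + b)" for x
    by (simp add: f_def poly_monom quadratic_char_def)
  have "inj (poly f)"
    using assms(5) bij_is_inj unfolding permutation_polynomial_def f_def by blast
  moreover have "poly f 0 = 0" "poly f 1 = b + 1" "poly f (-1) = b - 1"
    using assms(2,3) quadratic_char_neg_1[OF assms(1)]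
    by (simp_all add: poly_f) (simp add: quadratic_char_def)
  ultimately have "b + 1 \<noteq> 0" "b - 1 \<noteq> 0"
    by (metis injD one_neq_zero neg_equal_0_iff_equal)+
  have "card {x. poly f (x + a) - poly f x = c} \<le> 4 * s - 3" if "a \<noteq> 0" for a c
  proof -
    interpret difference_equation a b c s
      using assms(1-4) that \<open>b + 1 \<noteq> 0\<close> \<open>b - 1 \<noteq> 0\<close>
      by unfold_locales (simp_all add: add_eq_0_iff2)
    show ?thesis
      using card_solutions_le by (simp add: solutions_def poly_f)
  qed
  then have "diff_uniformity f \<le> 4 * s - 3"
    by (rule diff_uniformity_le)
  then show ?thesis
    using assms(3) unfolding f_def by linarith
qed

end
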